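(* Let $A$ be an integral domain with fraction field $K$, and let $U$ and $A^{\operatorname{ua}}$ be as in the context. Then $[1]^{\mathrm{reg}(A)}_A = [1]^{A^\circ}_A = \mathbb{Z}\langle U \rangle = U \cup \{0\}$, and therefore $A^{\operatorname{ua}} = ([1]^{\mathrm{reg}(A)}_A \setminus \{0\})^{-1}A$. Moreover, $[1]^{\mathrm{reg}(A)}_A=A$ if and only if $K$ is the only unit-additive overring of $A$.
   Context: A commutative ring is unit-additive if for all units $u,v$, $u+v$ is a unit or nilpotent. For the domain $A$, $\mathrm{reg}(A)=A^\circ=A\setminus\{0\}$. Define $W_0=\{1\}$, $V_0=A^\times$, and for $i\ge1$ let $W_i$ be the set of nonzero finite sums of elements of $V_{i-1}$ and $V_i=\{x\in A\mid ax\in W_i\text{ for some nonzero } a\in A\}$; set $U=\bigcup_i V_i$. It is known that $U$ is a saturated multiplicative set closed under nonzero sums and that $A^{\operatorname{ua}}:=U^{-1}A$ is the unique smallest unit-additive overring of $A$ (the unit-additive closure). For $T\subseteq A$, $[1]^T_A$ is the smallest additive subgroup $F$ of $A$ containing $1$ such that $ta\in F$ with $t\in T$, $a\in A$ implies $a\in F$. $\mathbb{Z}\langle U\rangle$ is the subring of $A$ generated by $U$. *)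

theory Defs
  imports "HOL-Computational_Algebra.Fraction_Field"
begin

text \<open>The domain A is the type 'a (class idom); its fraction field K is 'a fract,
  with A embedded via the canonical map a |-> Fract a 1.\<close>

abbreviation emb :: "'a::idom \<Rightarrow> 'a fract" where
  "emb a \<equiv> Fract a 1"

definition reg :: "'a::idom set" where
  "reg = {a. \<forall>b. a * b = 0 \<longrightarrow> b = 0}"

fun Vset :: "nat \<Rightarrow> 'a::idom set" where
  "Vset 0 = {x. x dvd 1}"
| "Vset (Suc i) =
     {x. \<exists>a. a \<noteq> 0 \<and>
        a * x \<in> {s. s \<noteq> 0 \<and> (\<exists>xs. xs \<noteq> [] \<and> set xs \<subseteq> Vset i \<and> s = sum_list xs)}}"

definition Wset :: "nat \<Rightarrow> 'a::idom set" where
  "Wset i = (if i = 0 then {1}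
             else {s. s \<noteq> 0 \<and> (\<exists>xs. xs \<noteq> [] \<and> set xs \<subseteq> Vset (i - 1) \<and> s = sum_list xs)})"

definition Uset :: "'a::idom set" where
  "Uset = (\<Union>i. Vset i)"

definition add_subgroup :: "'a::comm_ring_1 set \<Rightarrow> bool" where
  "add_subgroup F \<longleftrightarrow> 0 \<in> F \<and> (\<forall>x\<in>F. \<forall>y\<in>F. x + y \<in> F) \<and> (\<forall>x\<in>F. - x \<in> F)"

definition subring :: "'a::comm_ring_1 set \<Rightarrow> bool" where
  "subring B \<longleftrightarrow> 1 \<in> B \<and> add_subgroup B \<and> (\<forall>x\<in>B. \<forall>y\<in>B. x * y \<in> B)"

definition bracket1 :: "'a::comm_ring_1 set \<Rightarrow> 'a set" where
  "bracket1 T = \<Inter>{F. add_subgroup F \<and> 1 \<in> F \<and> (\<forall>t\<in>T. \<forall>a. t * a \<in> F \<longrightarrow> a \<in> F)}"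

definition ring_gen :: "'a::comm_ring_1 set \<Rightarrow> 'a set" where
  "ring_gen S = \<Inter>{B. subring B \<and> S \<subseteq> B}"

definition loc :: "'a::idom set \<Rightarrow> 'a fract set" where
  "loc S = {Fract a s | a s. s \<in> S}"

definition ua_closure :: "'a::idom fract set" where
  "ua_closure = loc Uset"

definition unit_in :: "'a::comm_ring_1 set \<Rightarrow> 'a \<Rightarrow> bool" where
  "unit_in B u \<longleftrightarrow> u \<in> B \<and> (\<exists>w\<in>B. u * w = 1)"

definition unit_additive :: "'a::comm_ring_1 set \<Rightarrow> bool" where
  "unit_additive B \<longleftrightarrow> (\<forall>u v. unit_in B u \<and> unit_in B v \<longrightarrow>
      unit_in B (u + v) \<or> (\<exists>n. (u + v) ^ n = 0))"

definition overring :: "'a::idom fract set \<Rightarrow> bool" where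
  "overring B \<longleftrightarrow> subring B \<and> range emb \<subseteq> B"

end

theory Submission
  imports Defs
begin

text \<open>
  U is saturated, multiplicative and closed under nonzero sums, so U \<union> {0} is a subring of A
  and an additive subgroup closed under division by nonzero elements; conversely every such
  subgroup containing 1 contains each V_i, by induction on i. This identifies [1]^(A-{0}),
  \<int>\<langle>U\<rangle> and U \<union> {0}; in a domain reg(A) = A - {0}.

  For the last claim: a unit-additive overring B of a domain has no nonzero nilpotents, so a
  nonzero sum of units of B is a unit; by induction on i every element of V_i becomes a unit
  of B, whence U^-1 A \<subseteq> B. Since U^-1 A is itself a unit-additive overring, K is the only
  one iff U^-1 A = K, i.e. iff every nonzero element of A lies in U.
\<close>

lemma Vset_nonzero: "x \<in> Vset i \<Longrightarrow> x \<noteq> (0::'a::idom)"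
  by (cases i) auto

lemma Vset_Suc_iff:
  "x \<in> Vset (Suc i) \<longleftrightarrow>
    (\<exists>a xs. a \<noteq> 0 \<and> a * x \<noteq> 0 \<and> xs \<noteq> [] \<and> set xs \<subseteq> Vset i \<and> a * x = sum_list xs)"
  by auto

lemma Vset_Suc_cancel_left: "t \<noteq> 0 \<Longrightarrow> t * x \<in> Vset i \<Longrightarrow> (x::'a::idom) \<in> Vset (Suc i)"
  unfolding Vset_Suc_iff
  by (intro exI[of _ t] exI[of _ "[t * x]"]) (auto dest: Vset_nonzero)

lemma Vset_mono: "i \<le> j \<Longrightarrow> Vset i \<subseteq> (Vset j :: 'a::idom set)"
  by (rule lift_Suc_mono_le[of Vset]) (use Vset_Suc_cancel_left[of 1] in auto)

lemma Vset_Suc_mult: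
  fixes x y :: "'a::idom"
  assumes "x \<in> Vset (Suc i)" "y \<noteq> 0" "\<And>z. z \<in> Vset i \<Longrightarrow> z * y \<in> Vset k"
  shows "x * y \<in> Vset (Suc k)"
proof -
  obtain a xs where a: "a \<noteq> 0" "a * x \<noteq> 0" "xs \<noteq> []" "set xs \<subseteq> Vset i" "a * x = sum_list xs"
    using assms(1) unfolding Vset_Suc_iff by blast
  have "a * (x * y) = sum_list (map (\<lambda>z. z * y) xs)"
    using a(5) by (simp add: sum_list_mult_const mult.assoc[symmetric])
  moreover have "a * (x * y) \<noteq> 0"
    using a(2) assms(2) by (simp add: mult.assoc[symmetric])
  moreover have "set (map (\<lambda>z. z * y) xs) \<subseteq> Vset k"
    using a(4) assms(3) by auto
  ultimately show ?thesis
    unfolding Vset_Suc_iff using a(1,3)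
    by (intro exI[of _ a] exI[of _ "map (\<lambda>z. z * y) xs"]) simp
qed

lemma Vset_mult_unit: "u dvd 1 \<Longrightarrow> y \<in> Vset j \<Longrightarrow> y * u \<in> (Vset j :: 'a::idom set)"
proof (induction j arbitrary: y)
  case 0
  then show ?case using mult_dvd_mono[of y 1 u 1] by simp
next
  case (Suc j)
  show ?case by (rule Vset_Suc_mult[of y j]) (use Suc in auto)
qed

lemma Vset_mult: "x \<in> Vset i \<Longrightarrow> y \<in> Vset j \<Longrightarrow> x * y \<in> (Vset (i + j) :: 'a::idom set)"
proof (induction i arbitrary: x)
  case 0
  then show ?case using Vset_mult_unit[of x y j] by (simp add: mult.commute)
next
  case (Suc i)
  show ?case
    unfolding add_Suc by (rule Vset_Suc_mult[of x i]) (use Suc in \<open>auto dest: Vset_nonzero\<close>)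
qed

lemma Uset_nonzero: "x \<in> Uset \<Longrightarrow> x \<noteq> (0::'a::idom)"
  by (auto simp: Uset_def dest: Vset_nonzero)

lemma unit_in_Uset: "u dvd 1 \<Longrightarrow> (u::'a::idom) \<in> Uset"
  unfolding Uset_def by (intro UN_I[of 0]) simp_all

lemma Uset_mult: "x \<in> Uset \<Longrightarrow> y \<in> Uset \<Longrightarrow> x * y \<in> (Uset :: 'a::idom set)"
  by (auto simp: Uset_def dest: Vset_mult)

lemma Uset_cancel_left: "t \<noteq> 0 \<Longrightarrow> t * x \<in> Uset \<Longrightarrow> (x::'a::idom) \<in> Uset"
  by (auto simp: Uset_def dest: Vset_Suc_cancel_left)

lemma Uset_add:
  fixes x y :: "'a::idom"
  assumes "x \<in> Uset" "y \<in> Uset" "x + y \<noteq> 0"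
  shows "x + y \<in> Uset"
proof -
  obtain i j where "x \<in> Vset i" "y \<in> Vset j"
    using assms(1,2) by (auto simp: Uset_def)
  then have "set [x, y] \<subseteq> Vset (max i j)"
    using Vset_mono[of i "max i j"] Vset_mono[of j "max i j"] by auto
  then have "x + y \<in> Vset (Suc (max i j))"
    unfolding Vset_Suc_iff using assms(3) by (intro exI[of _ 1] exI[of _ "[x, y]"]) simp
  then show ?thesis unfolding Uset_def by blast
qed

lemma subring_Uset_zero: "subring (Uset \<union> {0::'a::idom})"
  unfolding subring_def add_subgroup_def
proof (intro conjI ballI)
  fix x y :: 'a
  assume "x \<in> Uset \<union> {0}" "y \<in> Uset \<union> {0}"
  then show "x + y \<in> Uset \<union> {0}"
    using Uset_add by (cases "x + y = 0") auto
  show "x * y \<in> Uset \<union> {0}"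
    using \<open>x \<in> Uset \<union> {0}\<close> \<open>y \<in> Uset \<union> {0}\<close> Uset_mult by auto
  show "- x \<in> Uset \<union> {0}"
    using \<open>x \<in> Uset \<union> {0}\<close> Uset_mult[OF unit_in_Uset[of "-1"]] by auto
qed (simp_all add: unit_in_Uset)

lemma reg_eq_nonzero: "(reg :: 'a::idom set) = - {0}"
  unfolding reg_def by (auto dest: spec[of _ 1])

lemma sum_list_in_add_subgroup: "add_subgroup F \<Longrightarrow> set xs \<subseteq> F \<Longrightarrow> sum_list xs \<in> F"
  by (induction xs) (auto simp: add_subgroup_def)

lemma Vset_subset_saturated_subgroup:
  fixes F :: "'a::idom set"
  assumes F: "add_subgroup F" "1 \<in> F"
    and cancel: "\<And>t a. t \<noteq> 0 \<Longrightarrow> t * a \<in> F \<Longrightarrow> a \<in> F"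
  shows "Vset i \<subseteq> F"
proof (induction i)
  case 0
  show ?case
  proof
    fix u :: 'a
    assume "u \<in> Vset 0"
    then have "u dvd 1" by simp
    then obtain w where w: "1 = u * w" by (rule dvdE)
    then have "w \<noteq> 0" by auto
    moreover have "w * u \<in> F" using F(2) w by (simp add: mult.commute)
    ultimately show "u \<in> F" by (rule cancel)
  qed
next
  case (Suc i)
  show ?case
  proof
    fix x :: 'a
    assume "x \<in> Vset (Suc i)"
    then obtain a xs where "a \<noteq> 0" "set xs \<subseteq> Vset i" "a * x = sum_list xs"
      unfolding Vset_Suc_iff by blast
    moreover have "sum_list xs \<in> F"
      using F(1) \<open>set xs \<subseteq> Vset i\<close> Suc.IH by (blast intro: sum_list_in_add_subgroup)
    ultimately show "x \<in> F"
      using cancel[of a x] by simp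
  qed
qed

lemma bracket1_nonzero: "bracket1 (- {0 :: 'a::idom}) = Uset \<union> {0}"
proof
  show "bracket1 (- {0 :: 'a}) \<subseteq> Uset \<union> {0}"
    unfolding bracket1_def
    using subring_Uset_zero unit_in_Uset[of 1] Uset_cancel_left
    by (intro Inter_lower) (auto simp: subring_def)
  show "Uset \<union> {0} \<subseteq> bracket1 (- {0 :: 'a})"
    unfolding bracket1_def
  proof (intro Inter_greatest subsetI)
    fix F :: "'a set" and x :: 'a
    assume "F \<in> {F. add_subgroup F \<and> 1 \<in> F \<and> (\<forall>t\<in>- {0}. \<forall>a. t * a \<in> F \<longrightarrow> a \<in> F)}"
      and "x \<in> Uset \<union> {0}"
    then show "x \<in> F"
      using Vset_subset_saturated_subgroup[of F] by (auto simp: Uset_def add_subgroup_def)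
  qed
qed

lemma ring_gen_Uset: "ring_gen (Uset :: 'a::idom set) = Uset \<union> {0}"
proof
  show "ring_gen Uset \<subseteq> Uset \<union> {0::'a}"
    unfolding ring_gen_def using subring_Uset_zero by (intro Inter_lower) auto
  show "Uset \<union> {0::'a} \<subseteq> ring_gen Uset"
    unfolding ring_gen_def subring_def add_subgroup_def by blast
qed

lemma emb_add: "emb (a + b) = emb a + emb (b :: 'a::idom)"
  by simp

lemma emb_sum_list: "emb (sum_list xs) = sum_list (map emb (xs :: 'a::idom list))"
  by (induction xs) (simp_all add: Zero_fract_def emb_add del: add_fract)

lemma emb_eq_0_iff: "emb (a::'a::idom) = 0 \<longleftrightarrow> a = 0"
  by (simp add: Zero_fract_def eq_fract)

lemma unit_in_mult_cancel:
  assumes "subring B" "x \<in> B" "y \<in> B" "unit_in B (x * y)"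
  shows "unit_in B x"
proof -
  obtain w where "w \<in> B" "x * y * w = 1"
    using assms(4) unfolding unit_in_def by blast
  with assms show ?thesis
    unfolding unit_in_def subring_def by (metis mult.assoc)
qed

text \<open>In a domain the nilpotent alternative of unit-additivity only allows the sum 0.\<close>

lemma sum_list_units_unit_additive:
  fixes B :: "'a::idom set"
  assumes "unit_additive B" "xs \<noteq> []" "\<forall>x\<in>set xs. unit_in B x"
  shows "sum_list xs = 0 \<or> unit_in B (sum_list xs)"
  using assms(2,3)
proof (induction xs rule: list_nonempty_induct)
  case (cons x xs)
  then have "unit_in B x" "sum_list xs = 0 \<or> unit_in B (sum_list xs)" by simp_all
  with assms(1) show ?case
    unfolding unit_additive_def by auto
qed simp

lemma unit_in_emb_Vset:
  fixes B :: "'a::idom fract set"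
  assumes B: "overring B" "unit_additive B"
  shows "x \<in> Vset i \<Longrightarrow> unit_in B (emb x)"
proof (induction i arbitrary: x)
  case 0
  then obtain w where "1 = x * w" by auto
  then have "emb x * emb w = 1" by (simp add: One_fract_def)
  with B(1) show ?case unfolding unit_in_def overring_def by blast
next
  case (Suc i)
  then obtain a xs where a: "a \<noteq> 0" "a * x \<noteq> 0" "xs \<noteq> []" "set xs \<subseteq> Vset i" "a * x = sum_list xs"
    unfolding Vset_Suc_iff by blast
  have "sum_list (map emb xs) = 0 \<or> unit_in B (sum_list (map emb xs))"
    using a(3,4) Suc.IH by (intro sum_list_units_unit_additive[OF B(2)]) auto
  moreover have "emb (a * x) = sum_list (map emb xs)"
    using a(5) by (simp only: emb_sum_list)
  moreover have "emb (a * x) \<noteq> 0"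
    using a(2) emb_eq_0_iff by blast
  ultimately have "unit_in B (emb (a * x))"
    by metis
  then have "unit_in B (emb x * emb a)"
    by (simp add: mult.commute)
  with B(1) show ?case
    unfolding overring_def by (blast intro: unit_in_mult_cancel)
qed

lemma ua_closure_subset:
  fixes B :: "'a::idom fract set"
  assumes B: "overring B" "unit_additive B"
  shows "ua_closure \<subseteq> B"
proof
  fix q :: "'a fract"
  assume "q \<in> ua_closure"
  then obtain p s where q: "q = Fract p s" and "s \<in> Uset"
    unfolding ua_closure_def loc_def by blast
  then obtain w where w: "w \<in> B" "emb s * w = 1"
    using unit_in_emb_Vset[OF B] unfolding Uset_def unit_in_def by blast
  have "s \<noteq> 0" using \<open>s \<in> Uset\<close> Uset_nonzero by blast
  then have "q = emb p * inverse (emb s)"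
    using q by simp
  also have "inverse (emb s) = w"
    using w(2) by (rule inverse_unique)
  finally have "q = emb p * w" .
  with B(1) w(1) show "q \<in> B"
    unfolding overring_def subring_def by blast
qed

lemma overring_loc:
  fixes S :: "'a::idom set"
  assumes "1 \<in> S" "0 \<notin> S" "\<And>s t. s \<in> S \<Longrightarrow> t \<in> S \<Longrightarrow> s * t \<in> S"
  shows "overring (loc S)"
  unfolding overring_def subring_def add_subgroup_def
proof (intro conjI ballI)
  fix x y
  assume "x \<in> loc S" "y \<in> loc S"
  then obtain a s b t where xy: "x = Fract a s" "y = Fract b t" and "s \<in> S" "t \<in> S"
    unfolding loc_def by blast
  with assms have "s \<noteq> 0" "t \<noteq> 0" "s * t \<in> S" by auto
  with xy have "x + y = Fract (a * t + b * s) (s * t)" "x * y = Fract (a * b) (s * t)"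
    and "s * t \<in> S" by simp_all
  then show "x + y \<in> loc S" "x * y \<in> loc S"
    unfolding loc_def by blast+
  show "- x \<in> loc S"
    using \<open>x = Fract a s\<close> \<open>s \<in> S\<close> unfolding loc_def by auto
qed (use assms(1) in \<open>auto simp: loc_def One_fract_def Zero_fract_def\<close>)

lemma overring_ua_closure: "overring (ua_closure :: 'a::idom fract set)"
  unfolding ua_closure_def by (rule overring_loc) (auto simp: unit_in_Uset Uset_mult dest: Uset_nonzero)

lemma unit_in_ua_closureE:
  assumes "unit_in (ua_closure :: 'a::idom fract set) u"
  obtains a s where "u = Fract a s" "a \<in> Uset" "s \<in> Uset"
proof -
  obtain a s b t where u: "u = Fract a s" "s \<in> Uset" "t \<in> Uset" "Fract a s * Fract b t = 1"
    using assms unfolding unit_in_def ua_closure_def loc_def by auto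
  have "s \<noteq> 0" "t \<noteq> 0" using u(2,3) Uset_nonzero by auto
  with u(4) have "b * a = s * t"
    by (simp add: One_fract_def eq_fract mult.commute)
  moreover have "s * t \<in> Uset" using u(2,3) by (rule Uset_mult)
  moreover have "b \<noteq> 0"
    using \<open>b * a = s * t\<close> \<open>s \<noteq> 0\<close> \<open>t \<noteq> 0\<close> by auto
  ultimately have "a \<in> Uset"
    using Uset_cancel_left[of b a] by simp
  show thesis by (rule that[OF u(1) \<open>a \<in> Uset\<close> u(2)])
qed

lemma unit_additive_ua_closure: "unit_additive (ua_closure :: 'a::idom fract set)"
  unfolding unit_additive_def
proof (intro allI impI)
  fix u v :: "'a fract"
  assume "unit_in ua_closure u \<and> unit_in ua_closure v"
  then obtain a s b t where uv: "u = Fract a s" "v = Fract b t" and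
    U: "a \<in> Uset" "s \<in> Uset" "b \<in> Uset" "t \<in> Uset"
    by (auto elim!: unit_in_ua_closureE)
  have "s \<noteq> 0" "t \<noteq> 0" using U Uset_nonzero by auto
  then have sum: "u + v = Fract (a * t + b * s) (s * t)" using uv by simp
  show "unit_in ua_closure (u + v) \<or> (\<exists>n. (u + v) ^ n = 0)"
  proof (cases "a * t + b * s = 0")
    case True
    then have "(u + v) ^ 1 = 0"
      using sum \<open>s \<noteq> 0\<close> \<open>t \<noteq> 0\<close> by (simp add: Zero_fract_def eq_fract)
    then show ?thesis by blast
  next
    case False
    then have "a * t + b * s \<in> Uset" "s * t \<in> Uset"
      using U by (auto intro: Uset_add Uset_mult)
    moreover have "(u + v) * Fract (s * t) (a * t + b * s) = 1"
      using sum False \<open>s \<noteq> 0\<close> \<open>t \<noteq> 0\<close> by (simp add: One_fract_def eq_fract)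
    ultimately show ?thesis
      unfolding unit_in_def ua_closure_def loc_def using sum by blast
  qed
qed

lemma ua_closure_eq_UNIV_iff:
  "(ua_closure :: 'a::idom fract set) = UNIV \<longleftrightarrow> Uset \<union> {0::'a} = UNIV"
  unfolding ua_closure_def
proof
  assume loc: "loc (Uset :: 'a set) = UNIV"
  have "a \<in> Uset" if "a \<noteq> 0" for a :: 'a
  proof -
    obtain p s where "Fract 1 a = Fract p s" "s \<in> Uset"
      using loc unfolding loc_def by blast
    moreover have "s \<noteq> 0" using \<open>s \<in> Uset\<close> Uset_nonzero by blast
    ultimately have "p * a \<in> Uset" "p \<noteq> 0"
      using that by (auto simp: eq_fract)
    then show ?thesis by (rule Uset_cancel_left[rotated])
  qed
  then show "Uset \<union> {0::'a} = UNIV" by auto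
next
  assume U: "Uset \<union> {0::'a} = UNIV"
  have "q \<in> loc Uset" for q :: "'a fract"
  proof (cases q)
    case (Fract a s)
    with U have "s \<in> Uset" by auto
    with Fract show ?thesis unfolding loc_def by blast
  qed
  then show "loc (Uset :: 'a set) = UNIV" by blast
qed

lemma unit_additive_overrings_eq_UNIV_iff:
  "(\<forall>B :: 'a::idom fract set. overring B \<and> unit_additive B \<longrightarrow> B = UNIV) \<longleftrightarrow>
    (ua_closure :: 'a fract set) = UNIV"
  using overring_ua_closure unit_additive_ua_closure ua_closure_subset by blast

theorem theorem9p8:
  shows "bracket1 (reg :: 'a::idom set) = bracket1 (- {0 :: 'a})
    \<and> bracket1 (- {0 :: 'a}) = ring_gen (Uset :: 'a set)
    \<and> ring_gen (Uset :: 'a set) = Uset \<union> {0}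
    \<and> (ua_closure :: 'a fract set) = loc (bracket1 (reg :: 'a set) - {0})
    \<and> (bracket1 (reg :: 'a set) = UNIV \<longleftrightarrow>
         (\<forall>B :: 'a fract set. overring B \<and> unit_additive B \<longrightarrow> B = UNIV))"
proof -
  have bracket: "bracket1 (reg :: 'a set) = Uset \<union> {0}"
    by (simp add: reg_eq_nonzero bracket1_nonzero)
  then have "bracket1 (reg :: 'a set) - {0} = Uset"
    using Uset_nonzero by blast
  moreover have "bracket1 (reg :: 'a set) = UNIV \<longleftrightarrow>
      (\<forall>B :: 'a fract set. overring B \<and> unit_additive B \<longrightarrow> B = UNIV)"
    unfolding bracket unit_additive_overrings_eq_UNIV_iff ua_closure_eq_UNIV_iff ..
  ultimately show ?thesis
    by (simp add: reg_eq_nonzero bracket1_nonzero ring_gen_Uset ua_closure_def)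
qed

end
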